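(* As $n\to\infty$, $$\frac{\log_2(n)}{E_n(\gamma)}\to 1,$$ where $E_n(\gamma)$ is the average value of $\gamma(t)$ when $t$ is uniformly distributed on $\mathcal{T}_n$.
   Context: $\mathcal{T}_n$ is the set of ordered rooted binary trees (every internal node has exactly two ordered children) with $n$ leaves. A tree is a caterpillar if every node is either a leaf or has at least one leaf among its direct children. The subtree of $t$ at a node $v$ consists of $v$ and all its descendants, and $\gamma(t)$ is the largest number of leaves of a caterpillar occurring as the subtree of $t$ at some node. *)

theory Defs
  imports Complex_Main
begin

datatype btree = Leaf | Node btree btree

fun leaves :: "btree \<Rightarrow> nat" where
  "leaves Leaf = 1"
| "leaves (Node l r) = leaves l + leaves r"

definition trees :: "nat \<Rightarrow> btree set" where
  "trees n = {t. leaves t = n}"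

fun caterpillar :: "btree \<Rightarrow> bool" where
  "caterpillar Leaf = True"
| "caterpillar (Node l r) = ((l = Leaf \<or> r = Leaf) \<and> caterpillar l \<and> caterpillar r)"

fun subtrees :: "btree \<Rightarrow> btree set" where
  "subtrees Leaf = {Leaf}"
| "subtrees (Node l r) = insert (Node l r) (subtrees l \<union> subtrees r)"

definition gamma :: "btree \<Rightarrow> nat" where
  "gamma t = Max (leaves ` {s \<in> subtrees t. caterpillar s})"

definition E_gamma :: "nat \<Rightarrow> real" where
  "E_gamma n = (\<Sum>t\<in>trees n. real (gamma t)) / real (card (trees n))"

end

theory Submission
  imports Defs
    "HOL-Computational_Algebra.Formal_Power_Series"
    "HOL-Analysis.Convex"
    "HOL-Real_Asymp.Real_Asymp"
begin

unbundle fps_syntax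

(* For a tree t let cat_count k t be the number of nodes of t whose subtree is a
   caterpillar with k leaves.  Since caterpillars contain caterpillars of every smaller
   size, gamma t >= k holds iff cat_count k t > 0.  Summing over all trees with n leaves
   and using the decomposition t = Node l r, the generating functions of the first two
   moments of cat_count k satisfy linear equations whose coefficient is
   sqrt_gf = 1 - 2 (Catalan series) = sqrt(1 - 4x).  Solving them expresses both moments
   through Catalan numbers and the 2^(k-2) caterpillars with k leaves.
   - Upper bound (first moment): E_gamma n <= log2 n + 18, since the number of trees
     with gamma >= j decays geometrically once 2^j exceeds n.
   - Lower bound (second moment, via Cauchy-Schwarz): for k = (1 - eps) log2 n almost all
     trees contain a caterpillar with k leaves, so E_gamma n >= (1 - 2 eps) log2 n. *)

lemma leaves_pos: "leaves t \<ge> 1"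
  by (induction t) auto

lemma trees_0: "trees 0 = {}"
  using leaves_pos by (auto simp: trees_def) (metis Suc_le_eq)

lemma trees_1: "trees 1 = {Leaf}"
proof -
  have "t = Leaf" if "leaves t = 1" for t
  proof (cases t)
    case (Node l r)
    then show ?thesis using that leaves_pos[of l] leaves_pos[of r] by simp
  qed simp
  then show ?thesis by (auto simp: trees_def)
qed

definition root_splits :: "nat \<Rightarrow> (nat \<times> btree \<times> btree) set" where
  "root_splits n = (SIGMA i:{0..n}. trees i \<times> trees (n - i))"

lemma trees_decomp:
  "trees n = (if n = 1 then {Leaf} else {}) \<union> (\<lambda>(i,l,r). Node l r) ` root_splits n"
proof (intro set_eqI iffI)
  fix t assume t: "t \<in> trees n"
  show "t \<in> (if n = 1 then {Leaf} else {}) \<union> (\<lambda>(i,l,r). Node l r) ` root_splits n"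
  proof (cases t)
    case (Node l r)
    then have "(leaves l, l, r) \<in> root_splits n" using t by (auto simp: root_splits_def trees_def)
    then show ?thesis using Node by force
  qed (use t in \<open>auto simp: trees_def\<close>)
qed (auto simp: root_splits_def trees_def split: if_splits)

lemma finite_trees: "finite (trees n)"
proof (induction n rule: less_induct)
  case (less n)
  have "finite (root_splits n)" unfolding root_splits_def
  proof (rule finite_SigmaI)
    fix i assume "i \<in> {0..n}"
    then show "finite (trees i \<times> trees (n - i))"
      using less trees_0 by (cases "i = 0 \<or> i = n") auto
  qed simp
  then show ?case by (subst trees_decomp) auto
qed

lemma inj_on_root_splits: "inj_on (\<lambda>(i,l,r). Node l r) (root_splits n)"
  by (auto simp: inj_on_def root_splits_def trees_def)

lemma sum_trees:
  "(\<Sum>t\<in>trees n. f t) = (if n = 1 then f Leaf else 0) +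
     (\<Sum>i=0..n. \<Sum>l\<in>trees i. \<Sum>r\<in>trees (n - i). f (Node l r))"
proof -
  have fin: "finite (root_splits n)" using finite_trees by (auto simp: root_splits_def)
  have "(\<Sum>t\<in>trees n. f t) = (\<Sum>t\<in>(if n = 1 then {Leaf} else {}). f t) +
      (\<Sum>t\<in>(\<lambda>(i,l,r). Node l r) ` root_splits n. f t)"
    by (subst trees_decomp, rule sum.union_disjoint) (use fin in auto)
  also have "(\<Sum>t\<in>(\<lambda>(i,l,r). Node l r) ` root_splits n. f t) =
      (\<Sum>(i,l,r)\<in>root_splits n. f (Node l r))"
    by (subst sum.reindex[OF inj_on_root_splits]) (simp add: case_prod_beta)
  also have "\<dots> = (\<Sum>i=0..n. \<Sum>(l,r)\<in>trees i \<times> trees (n - i). f (Node l r))"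
    unfolding root_splits_def by (subst sum.Sigma) (auto simp: finite_trees)
  also have "\<dots> = (\<Sum>i=0..n. \<Sum>l\<in>trees i. \<Sum>r\<in>trees (n - i). f (Node l r))"
    by (simp add: sum.cartesian_product finite_trees)
  finally show ?thesis by simp
qed

section \<open>Generating functions over trees\<close>

definition tree_gf :: "(btree \<Rightarrow> real) \<Rightarrow> real fps" where
  "tree_gf f = Abs_fps (\<lambda>n. \<Sum>t\<in>trees n. f t)"

definition split_gf :: "(btree \<Rightarrow> btree \<Rightarrow> real) \<Rightarrow> real fps" where
  "split_gf g = Abs_fps (\<lambda>n. \<Sum>i=0..n. \<Sum>l\<in>trees i. \<Sum>r\<in>trees (n - i). g l r)"

lemma tree_gf_nth: "tree_gf f $ n = (\<Sum>t\<in>trees n. f t)"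
  by (simp add: tree_gf_def)

lemma tree_gf_decomp:
  "tree_gf f = fps_const (f Leaf) * fps_X + split_gf (\<lambda>l r. f (Node l r))"
  unfolding tree_gf_def split_gf_def
  by (rule fps_ext) (subst sum_trees, simp add: fps_mult_left_const_nth)

lemma split_gf_mult: "split_gf (\<lambda>l r. a l * b r) = tree_gf a * tree_gf b"
  by (rule fps_ext) (simp add: tree_gf_def split_gf_def fps_mult_nth sum_product)

lemma split_gf_add: "split_gf (\<lambda>l r. g l r + h l r) = split_gf g + split_gf h"
  by (rule fps_ext) (simp add: split_gf_def sum.distrib)

lemma split_gf_cmult: "split_gf (\<lambda>l r. c * g l r) = fps_const c * split_gf g"
  by (rule fps_ext) (simp add: split_gf_def sum_distrib_left fps_mult_left_const_nth)

definition cat_here :: "nat \<Rightarrow> btree \<Rightarrow> nat" where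
  "cat_here k t = (if caterpillar t \<and> leaves t = k then 1 else 0)"

fun cat_count :: "nat \<Rightarrow> btree \<Rightarrow> nat" where
  "cat_count k Leaf = cat_here k Leaf"
| "cat_count k (Node l r) = cat_here k (Node l r) + cat_count k l + cat_count k r"

lemma cat_count_small: "leaves t < k \<Longrightarrow> cat_count k t = 0"
  by (induction t) (auto simp: cat_here_def)

lemma cat_here_Node: "cat_here k (Node l r) \<noteq> 0 \<Longrightarrow> leaves l < k \<and> leaves r < k"
  using leaves_pos[of l] leaves_pos[of r] by (auto simp: cat_here_def split: if_splits)

text \<open>If the root subtree counts, neither child subtree can contain a caterpillar of the
  same size, so the square of cat_count splits without a mixed root term.\<close>
lemma cat_count_sq_Node:
  "real (cat_count k (Node l r)) ^ 2 = real (cat_here k (Node l r)) +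
     (real (cat_count k l) ^ 2 * 1 + 1 * real (cat_count k r) ^ 2
      + 2 * (real (cat_count k l) * real (cat_count k r)))"
proof (cases "cat_here k (Node l r) = 0")
  case True then show ?thesis by (simp add: power2_eq_square algebra_simps)
next
  case False
  then have "cat_here k (Node l r) = 1" by (simp add: cat_here_def split: if_splits)
  moreover have "cat_count k l = 0" "cat_count k r = 0"
    using cat_here_Node[OF False] cat_count_small by auto
  ultimately show ?thesis by simp
qed

definition num_cats :: "nat \<Rightarrow> nat" where
  "num_cats k = card {t \<in> trees k. caterpillar t}"

lemma tree_gf_cat_here:
  "tree_gf (\<lambda>t. real (cat_here k t)) = fps_const (real (num_cats k)) * fps_X ^ k"
proof (rule fps_ext)
  fix n
  have "(\<Sum>t\<in>trees n. real (cat_here k t)) = (if n = k then real (num_cats k) else 0)"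
  proof (cases "n = k")
    case True
    have "(\<Sum>t\<in>trees n. real (cat_here k t)) = (\<Sum>t\<in>trees n. if caterpillar t then 1 else 0)"
      using True by (intro sum.cong) (auto simp: cat_here_def trees_def)
    then show ?thesis
      using True finite_trees by (simp add: sum.If_cases num_cats_def Int_def)
  qed (auto intro!: sum.neutral simp: cat_here_def trees_def)
  then show "tree_gf (\<lambda>t. real (cat_here k t)) $ n = (fps_const (real (num_cats k)) * fps_X ^ k) $ n"
    by (simp add: tree_gf_nth fps_mult_left_const_nth fps_X_power_nth)
qed


abbreviation "catalan_gf \<equiv> tree_gf (\<lambda>_. 1)"
abbreviation "leaves_gf \<equiv> tree_gf (\<lambda>t. real (leaves t))"
abbreviation "falling_gf \<equiv> tree_gf (\<lambda>t. real (leaves t) * (real (leaves t) - 1))"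
abbreviation "moment1_gf k \<equiv> tree_gf (\<lambda>t. real (cat_count k t))"
abbreviation "moment2_gf k \<equiv> tree_gf (\<lambda>t. real (cat_count k t) ^ 2)"

text \<open>All generating functions f below satisfy an equation f = s + f c + c f, where c is
  the Catalan series (from the two ways the statistic can sit in a subtree of the root).\<close>
lemma solve_symmetric_linear:
  assumes "(f::'a::comm_ring_1) = s + f * c + c * f"
  shows "f * (1 - 2 * c) = s"
proof -
  have "f * (1 - 2 * c) = f - (f * c + c * f)" by (simp add: algebra_simps mult_2)
  also have "\<dots> = s" using arg_cong[OF assms, of "\<lambda>x. x - (f * c + c * f)"] by simp
  finally show ?thesis .
qed

text \<open>The common coefficient of all linear equations below; it is sqrt(1 - 4x).\<close>
abbreviation "sqrt_gf \<equiv> 1 - 2 * catalan_gf"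

lemma sqrt_gf_squared: "sqrt_gf * sqrt_gf = 1 - 4 * fps_X"
proof -
  have "catalan_gf = fps_X + split_gf (\<lambda>l r. 1 * 1)"
    by (subst tree_gf_decomp) simp
  then have "catalan_gf = fps_X + catalan_gf * catalan_gf"
    by (simp only: split_gf_mult)
  then show ?thesis by algebra
qed

lemma sqrt_gf_nonzero: "sqrt_gf \<noteq> 0"
proof
  assume "sqrt_gf = 0"
  then have "sqrt_gf $ 0 = 0" by simp
  then show False by (simp add: tree_gf_nth trees_0 numeral_fps_const)
qed

lemma leaves_gf_sqrt: "leaves_gf * sqrt_gf = fps_X"
proof -
  have "leaves_gf = fps_X + split_gf (\<lambda>l r. real (leaves l) * 1 + 1 * real (leaves r))"
    by (subst tree_gf_decomp) simp
  then have "leaves_gf = fps_X + leaves_gf * catalan_gf + catalan_gf * leaves_gf"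
    by (simp only: split_gf_mult split_gf_add add.assoc)
  then show ?thesis by (rule solve_symmetric_linear)
qed

lemma falling_gf_sqrt: "falling_gf * sqrt_gf = 2 * leaves_gf * leaves_gf"
proof -
  have "falling_gf = split_gf (\<lambda>l r. real (leaves l) * (real (leaves l) - 1) * 1
      + 1 * (real (leaves r) * (real (leaves r) - 1)) + 2 * (real (leaves l) * real (leaves r)))"
    by (subst tree_gf_decomp) (simp add: algebra_simps)
  then have "falling_gf = 2 * leaves_gf * leaves_gf + falling_gf * catalan_gf
      + catalan_gf * falling_gf"
    by (simp only: split_gf_mult split_gf_add split_gf_cmult add.assoc)
       (simp add: numeral_fps_const algebra_simps)
  then show ?thesis by (rule solve_symmetric_linear)
qed

lemma moment1_gf_sqrt:
  "moment1_gf k * sqrt_gf = fps_const (real (num_cats k)) * fps_X ^ k"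
proof -
  have "moment1_gf k = fps_const (real (cat_here k Leaf)) * fps_X
      + split_gf (\<lambda>l r. real (cat_here k (Node l r))
      + (real (cat_count k l) * 1 + 1 * real (cat_count k r)))"
    by (subst tree_gf_decomp) (simp add: algebra_simps)
  then have "moment1_gf k = tree_gf (\<lambda>t. real (cat_here k t))
      + moment1_gf k * catalan_gf + catalan_gf * moment1_gf k"
    by (simp only: split_gf_mult split_gf_add add.assoc tree_gf_decomp[of "\<lambda>t. real (cat_here k t)"])
  then show ?thesis unfolding tree_gf_cat_here by (rule solve_symmetric_linear)
qed

lemma moment2_gf_sqrt:
  "moment2_gf k * sqrt_gf = fps_const (real (num_cats k)) * fps_X ^ k
     + 2 * moment1_gf k * moment1_gf k"
proof -
  have "moment2_gf k = fps_const (real (cat_here k Leaf)) * fps_X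
      + split_gf (\<lambda>l r. real (cat_here k (Node l r)) + (real (cat_count k l) ^ 2 * 1
      + 1 * real (cat_count k r) ^ 2 + 2 * (real (cat_count k l) * real (cat_count k r))))"
  proof -
    have "real (cat_count k Leaf) ^ 2 = real (cat_here k Leaf)"
      by (auto simp: cat_here_def)
    then show ?thesis by (subst tree_gf_decomp) (simp only: cat_count_sq_Node)
  qed
  then have "moment2_gf k = (tree_gf (\<lambda>t. real (cat_here k t)) + 2 * moment1_gf k * moment1_gf k)
      + moment2_gf k * catalan_gf + catalan_gf * moment2_gf k"
    by (simp only: split_gf_mult split_gf_add split_gf_cmult add.assoc
        tree_gf_decomp[of "\<lambda>t. real (cat_here k t)"]) (simp add: numeral_fps_const algebra_simps)
  then show ?thesis unfolding tree_gf_cat_here by (rule solve_symmetric_linear)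
qed

lemma moment1_gf_closed:
  assumes "k \<ge> 1"
  shows "moment1_gf k = fps_const (real (num_cats k)) * fps_X ^ (k - 1) * leaves_gf"
proof -
  have "fps_X ^ k = fps_X ^ (k - 1) * (fps_X :: real fps)"
    using assms by (simp flip: power_Suc2)
  then have "moment1_gf k * sqrt_gf
      = (fps_const (real (num_cats k)) * fps_X ^ (k - 1) * leaves_gf) * sqrt_gf"
    by (simp only: moment1_gf_sqrt leaves_gf_sqrt mult.assoc)
  then show ?thesis using sqrt_gf_nonzero by simp
qed

lemma moment2_gf_closed:
  assumes "k \<ge> 1"
  shows "moment2_gf k = moment1_gf k
           + fps_const (real (num_cats k) ^ 2) * fps_X ^ (2 * k - 2) * falling_gf"
proof -
  define c where "c = fps_const (real (num_cats k))"
  define z :: "real fps" where "z = fps_X ^ (k - 1)"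
  have zz: "fps_X ^ (2 * k - 2) = z * z" and cc: "fps_const (real (num_cats k) ^ 2) = c * c"
    using assms by (simp_all add: z_def c_def power2_eq_square flip: power_add)
  have F: "moment1_gf k = c * z * leaves_gf"
    unfolding c_def z_def by (rule moment1_gf_closed[OF assms])
  have "(moment1_gf k + c * c * (z * z) * falling_gf) * sqrt_gf
      = moment1_gf k * sqrt_gf + c * c * (z * z) * (falling_gf * sqrt_gf)"
    by (simp add: algebra_simps)
  also have "\<dots> = moment1_gf k * sqrt_gf + 2 * moment1_gf k * moment1_gf k"
    unfolding falling_gf_sqrt by (subst (2 3) F) (simp add: algebra_simps)
  also have "\<dots> = moment2_gf k * sqrt_gf"
    by (simp only: moment1_gf_sqrt moment2_gf_sqrt)
  finally show ?thesis using sqrt_gf_nonzero by (simp add: zz cc)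
qed

section \<open>Catalan numbers\<close>

text \<open>ntrees n is the number of trees with n leaves (the Catalan number of index n - 1).\<close>
definition ntrees :: "nat \<Rightarrow> real" where "ntrees n = real (card (trees n))"

lemma catalan_gf_nth: "catalan_gf $ n = ntrees n"
  by (simp add: tree_gf_nth ntrees_def)

lemma leaves_gf_nth: "leaves_gf $ n = real n * ntrees n"
proof -
  have "leaves_gf $ n = (\<Sum>t\<in>trees n. real n)"
    unfolding tree_gf_nth by (intro sum.cong) (auto simp: trees_def)
  then show ?thesis by (simp add: ntrees_def)
qed

lemma falling_gf_nth: "falling_gf $ n = real n * (real n - 1) * ntrees n"
proof -
  have "falling_gf $ n = (\<Sum>t\<in>trees n. real n * (real n - 1))"
    unfolding tree_gf_nth by (intro sum.cong) (auto simp: trees_def)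
  then show ?thesis by (simp add: ntrees_def)
qed

lemma ntrees_1: "ntrees 1 = 1"
  unfolding ntrees_def trees_1 by simp

text \<open>The Catalan recurrence, read off from (1 - 4x) leaves_gf = x sqrt_gf.\<close>
lemma ntrees_step:
  assumes "m \<ge> 2"
  shows "ntrees m = (4 - 6 / real m) * ntrees (m - 1)"
proof -
  have "leaves_gf * (sqrt_gf * sqrt_gf) = fps_X * sqrt_gf"
    using leaves_gf_sqrt by (simp flip: mult.assoc)
  then have "leaves_gf - 4 * (fps_X * leaves_gf) = fps_X - 2 * (fps_X * catalan_gf)"
    unfolding sqrt_gf_squared by (simp add: algebra_simps)
  then have "(leaves_gf - 4 * (fps_X * leaves_gf)) $ m = (fps_X - 2 * (fps_X * catalan_gf)) $ m"
    by simp
  then have "leaves_gf $ m - 4 * leaves_gf $ (m - 1) = - 2 * catalan_gf $ (m - 1)"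
    using assms by (simp add: numeral_fps_const fps_mult_left_const_nth)
  then have "real m * ntrees m = (4 * real m - 6) * ntrees (m - 1)"
    using assms by (simp add: leaves_gf_nth catalan_gf_nth of_nat_diff algebra_simps)
  then show ?thesis using assms by (simp add: field_simps)
qed

lemma ntrees_pos: "m \<ge> 1 \<Longrightarrow> ntrees m > 0"
proof (induction m rule: dec_induct)
  case base then show ?case using ntrees_1 by simp
next
  case (step m)
  have "4 - 6 / real (Suc m) > 0" using step(1) by (simp add: field_simps)
  then show ?case using ntrees_step[of "Suc m"] step by simp
qed

lemma ntrees_nonneg: "ntrees m \<ge> 0"
  by (simp add: ntrees_def)

lemma ntrees_upper: "m \<ge> 1 \<Longrightarrow> ntrees (m + i) \<le> 4 ^ i * ntrees m"
proof (induction i)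
  case (Suc i)
  have "ntrees (m + Suc i) = (4 - 6 / real (m + Suc i)) * ntrees (m + i)"
    using ntrees_step[of "m + Suc i"] Suc by simp
  also have "\<dots> \<le> 4 * ntrees (m + i)"
    using ntrees_pos[of "m + i"] Suc by (intro mult_right_mono) auto
  also have "\<dots> \<le> 4 * (4 ^ i * ntrees m)" using Suc by simp
  finally show ?case by simp
qed simp

lemma ntrees_lower_pow:
  "m \<ge> 1 \<Longrightarrow> ntrees (m + i) \<ge> (4 - 6 / real (m + 1)) ^ i * ntrees m"
proof (induction i)
  case (Suc i)
  have q: "4 - 6 / real (m + 1) \<ge> 0" using Suc by (simp add: field_simps)
  have "(4 - 6 / real (m + 1)) ^ Suc i * ntrees m
      = (4 - 6 / real (m + 1)) * ((4 - 6 / real (m + 1)) ^ i * ntrees m)"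
    by simp
  also have "\<dots> \<le> (4 - 6 / real (m + 1)) * ntrees (m + i)"
    using Suc q by (intro mult_left_mono) auto
  also have "\<dots> \<le> (4 - 6 / real (m + Suc i)) * ntrees (m + i)"
    using ntrees_nonneg[of "m + i"] by (intro mult_right_mono) (auto simp: frac_le)
  also have "\<dots> = ntrees (m + Suc i)"
    using ntrees_step[of "m + Suc i"] Suc by simp
  finally show ?case .
qed simp

lemma ntrees_lower:
  assumes m: "m \<ge> 1"
  shows "ntrees (m + i) \<ge> 4 ^ i * (1 - 3 * real i / (2 * real (m + 1))) * ntrees m"
proof -
  have e: "4 - 6 / real (m + 1) = 4 * (1 + (- 3 / (2 * real (m + 1))))" by (simp add: field_simps)
  have b: "1 + real i * (- 3 / (2 * real (m + 1))) \<le> (1 + (- 3 / (2 * real (m + 1)))) ^ i"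
    by (rule Bernoulli_inequality) (use m in \<open>simp add: field_simps\<close>)
  have "4 ^ i * (1 - 3 * real i / (2 * real (m + 1))) * ntrees m
      \<le> 4 ^ i * (1 + (- 3 / (2 * real (m + 1)))) ^ i * ntrees m"
    using b ntrees_pos[OF m] by (intro mult_right_mono mult_left_mono) (auto simp: field_simps)
  also have "\<dots> = (4 - 6 / real (m + 1)) ^ i * ntrees m" by (simp only: e power_mult_distrib)
  also have "\<dots> \<le> ntrees (m + i)" by (rule ntrees_lower_pow[OF m])
  finally show ?thesis .
qed


lemma Leaf_in_subtrees: "Leaf \<in> subtrees t"
  by (induction t) auto

lemma self_in_subtrees: "t \<in> subtrees t"
  by (cases t) auto

lemma finite_subtrees: "finite (subtrees t)"
  by (induction t) auto

lemma leaves_subtree: "s \<in> subtrees t \<Longrightarrow> leaves s \<le> leaves t"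
  by (induction t) auto

lemma subtrees_trans: "s \<in> subtrees t \<Longrightarrow> u \<in> subtrees s \<Longrightarrow> u \<in> subtrees t"
  by (induction t) (auto simp: self_in_subtrees)

text \<open>A caterpillar contains caterpillar subtrees of every smaller size: removing the
  leaf child of the root of a caterpillar leaves a caterpillar with one leaf less.\<close>
lemma caterpillar_subtree_sizes:
  "caterpillar s \<Longrightarrow> 1 \<le> j \<Longrightarrow> j \<le> leaves s \<Longrightarrow>
     \<exists>u\<in>subtrees s. caterpillar u \<and> leaves u = j"
proof (induction s)
  case (Node l r)
  show ?case
  proof (cases "j = leaves (Node l r)")
    case True then show ?thesis using Node.prems self_in_subtrees by blast
  next
    case False
    then have "j < leaves (Node l r)" using Node.prems by simp
    then show ?thesis using Node by (auto simp: leaves_pos)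
  qed
qed auto

definition cat_sizes :: "btree \<Rightarrow> nat set" where
  "cat_sizes t = leaves ` {s \<in> subtrees t. caterpillar s}"

lemma finite_cat_sizes: "finite (cat_sizes t)"
  by (simp add: cat_sizes_def finite_subtrees)

lemma one_in_cat_sizes: "1 \<in> cat_sizes t"
  unfolding cat_sizes_def using Leaf_in_subtrees by force

lemma gamma_in_cat_sizes: "gamma t \<in> cat_sizes t"
  unfolding gamma_def cat_sizes_def[symmetric]
  using finite_cat_sizes one_in_cat_sizes Max_in by blast

lemma le_gamma: "j \<in> cat_sizes t \<Longrightarrow> j \<le> gamma t"
  unfolding gamma_def cat_sizes_def[symmetric] using finite_cat_sizes by simp

lemma gamma_le_leaves: "gamma t \<le> leaves t"
  using gamma_in_cat_sizes[of t] by (auto simp: cat_sizes_def leaves_subtree)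

lemma cat_count_pos_iff:
  "cat_count k t > 0 \<longleftrightarrow> (\<exists>s\<in>subtrees t. caterpillar s \<and> leaves s = k)"
  by (induction t) (auto simp: cat_here_def)

lemma le_gamma_iff_cat_count:
  assumes "1 \<le> j"
  shows "j \<le> gamma t \<longleftrightarrow> cat_count j t > 0"
proof
  assume j: "j \<le> gamma t"
  obtain s where s: "s \<in> subtrees t" "caterpillar s" "leaves s = gamma t"
    using gamma_in_cat_sizes[of t] by (auto simp: cat_sizes_def)
  then obtain u where "u \<in> subtrees s" "caterpillar u" "leaves u = j"
    using caterpillar_subtree_sizes[OF s(2) assms] j by auto
  then show "cat_count j t > 0"
    unfolding cat_count_pos_iff using subtrees_trans[OF s(1)] by blast
next
  assume "cat_count j t > 0"
  then show "j \<le> gamma t"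
    unfolding cat_count_pos_iff cat_sizes_def by (intro le_gamma) (auto simp: cat_sizes_def)
qed

text \<open>A caterpillar with j + 1 \<ge> 3 leaves has exactly one leaf child at its root (on the
  left or on the right), and removing it leaves a caterpillar with j leaves.\<close>
lemma caterpillars_Suc:
  assumes "j \<ge> 1"
  shows "{t \<in> trees (Suc j). caterpillar t} =
     Node Leaf ` {t \<in> trees j. caterpillar t} \<union> (\<lambda>s. Node s Leaf) ` {t \<in> trees j. caterpillar t}"
proof (intro set_eqI iffI)
  fix t assume "t \<in> {t \<in> trees (Suc j). caterpillar t}"
  then show "t \<in> Node Leaf ` {t \<in> trees j. caterpillar t} \<union> (\<lambda>s. Node s Leaf) ` {t \<in> trees j. caterpillar t}"
    using assms by (cases t) (auto simp: trees_def)
qed (auto simp: trees_def)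

lemma num_cats_Suc:
  assumes "j \<ge> 2"
  shows "num_cats (Suc j) = 2 * num_cats j"
proof -
  let ?X = "{t \<in> trees j. caterpillar t}"
  have fin: "finite ?X" using finite_trees by simp
  have disj: "Node Leaf ` ?X \<inter> (\<lambda>s. Node s Leaf) ` ?X = {}"
    using assms by (auto simp: trees_def)
  have "num_cats (Suc j) = card (Node Leaf ` ?X) + card ((\<lambda>s. Node s Leaf) ` ?X)"
    unfolding num_cats_def using assms
    by (subst caterpillars_Suc) (auto intro!: card_Un_disjoint fin disj)
  also have "\<dots> = 2 * num_cats j"
    by (subst card_image, simp add: inj_on_def)+ (simp add: num_cats_def)
  finally show ?thesis .
qed

lemma caterpillars_1: "{t \<in> trees 1. caterpillar t} = {Leaf}"
  unfolding trees_1 by auto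

lemma num_cats_1: "num_cats 1 = 1"
  unfolding num_cats_def caterpillars_1 by simp

lemma num_cats_2: "num_cats 2 = 1"
proof -
  have "{t \<in> trees (Suc 1). caterpillar t} = {Node Leaf Leaf}"
    using caterpillars_Suc[of 1] by (simp only: caterpillars_1) simp
  then show ?thesis unfolding num_cats_def by (simp add: numeral_2_eq_2)
qed

lemma num_cats_eq: "j \<ge> 2 \<Longrightarrow> num_cats j = 2 ^ (j - 2)"
proof (induction j rule: dec_induct)
  case base then show ?case by (simp add: num_cats_2)
next
  case (step j)
  have "Suc j - 2 = Suc (j - 2)" using step(1) by simp
  then show ?case using step by (simp add: num_cats_Suc)
qed

lemma num_cats_le: "j \<ge> 1 \<Longrightarrow> num_cats j \<le> 2 ^ j"
  using num_cats_1 num_cats_eq[of j] by (cases "j = 1") auto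

lemma moment1_eq:
  assumes "k \<ge> 1" "k \<le> n + 1"
  shows "(\<Sum>t\<in>trees n. real (cat_count k t))
           = real (num_cats k) * real (n + 1 - k) * ntrees (n + 1 - k)"
proof -
  have "(\<Sum>t\<in>trees n. real (cat_count k t)) = moment1_gf k $ n" by (simp add: tree_gf_nth)
  also have "\<dots> = real (num_cats k) * (fps_X ^ (k - 1) * leaves_gf) $ n"
    by (simp only: moment1_gf_closed[OF assms(1)] mult.assoc fps_mult_left_const_nth)
  also have "\<dots> = real (num_cats k) * leaves_gf $ (n + 1 - k)"
    using assms by (simp add: fps_X_power_mult_nth)
  finally show ?thesis by (simp add: leaves_gf_nth)
qed

lemma moment2_eq:
  assumes "k \<ge> 1" "2 * k \<le> n + 2"
  shows "(\<Sum>t\<in>trees n. real (cat_count k t) ^ 2) = (\<Sum>t\<in>trees n. real (cat_count k t))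
     + real (num_cats k) ^ 2 * (real (n + 2 - 2 * k) * (real (n + 2 - 2 * k) - 1)
         * ntrees (n + 2 - 2 * k))"
proof -
  have "(\<Sum>t\<in>trees n. real (cat_count k t) ^ 2) = moment2_gf k $ n" by (simp add: tree_gf_nth)
  also have "\<dots> = moment1_gf k $ n + real (num_cats k) ^ 2 * (fps_X ^ (2 * k - 2) * falling_gf) $ n"
    by (simp only: moment2_gf_closed[OF assms(1)] mult.assoc fps_mult_left_const_nth fps_add_nth)
  also have "\<dots> = moment1_gf k $ n + real (num_cats k) ^ 2 * falling_gf $ (n + 2 - 2 * k)"
    using assms by (simp add: fps_X_power_mult_nth)
  finally show ?thesis by (simp add: falling_gf_nth tree_gf_nth)
qed


section \<open>Upper bound: the first moment method\<close>

lemma E_gamma_eq: "E_gamma n = (\<Sum>t\<in>trees n. real (gamma t)) / ntrees n"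
  by (simp add: E_gamma_def ntrees_def)

lemma sum_gamma_layers:
  "(\<Sum>t\<in>trees n. real (gamma t)) = (\<Sum>j=1..n. real (card {t \<in> trees n. j \<le> gamma t}))"
proof -
  have "real (gamma t) = (\<Sum>j=1..n. if j \<le> gamma t then 1 else 0)" if "t \<in> trees n" for t
  proof -
    have "{1..n} \<inter> {j. j \<le> gamma t} = {1..gamma t}"
      using that gamma_le_leaves[of t] by (auto simp: trees_def)
    then show ?thesis by (simp add: sum.If_cases)
  qed
  then have "(\<Sum>t\<in>trees n. real (gamma t))
      = (\<Sum>t\<in>trees n. \<Sum>j=1..n. if j \<le> gamma t then 1 else 0)"
    by (intro sum.cong) auto
  also have "\<dots> = (\<Sum>j=1..n. \<Sum>t\<in>trees n. if j \<le> gamma t then 1 else 0)"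
    by (rule sum.swap)
  also have "\<dots> = (\<Sum>j=1..n. real (card {t \<in> trees n. j \<le> gamma t}))"
    using finite_trees by (simp add: sum.If_cases Int_def)
  finally show ?thesis .
qed

text \<open>First moment bound: few trees contain a caterpillar with j leaves once 2^j is large
  compared to the number of positions available for it.\<close>
lemma card_gamma_ge_first_moment:
  assumes "1 \<le> j" "j \<le> n"
  shows "real (card {t \<in> trees n. j \<le> gamma t}) \<le> 2 ^ j * real n * ntrees (n + 1 - j)"
proof -
  have "real (card {t \<in> trees n. j \<le> gamma t}) = (\<Sum>t\<in>trees n. if j \<le> gamma t then 1 else 0)"
    using finite_trees by (simp add: sum.If_cases Int_def)
  also have "\<dots> \<le> (\<Sum>t\<in>trees n. real (cat_count j t))"
    using le_gamma_iff_cat_count[OF assms(1)] by (intro sum_mono) auto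
  also have "\<dots> = real (num_cats j) * real (n + 1 - j) * ntrees (n + 1 - j)"
    using assms by (intro moment1_eq) auto
  also have "\<dots> \<le> 2 ^ j * real n * ntrees (n + 1 - j)"
  proof (intro mult_right_mono mult_mono)
    show "real (num_cats j) \<le> 2 ^ j"
      using num_cats_le[OF assms(1)] by (metis of_nat_le_iff of_nat_numeral of_nat_power)
  qed (use assms ntrees_nonneg in auto)
  finally show ?thesis .
qed

lemma geometric_sum_bound:
  fixes v :: "nat \<Rightarrow> real"
  assumes "\<And>j. a \<le> j \<Longrightarrow> j < b \<Longrightarrow> 3 * v (Suc j) \<le> 2 * v j" "a \<le> b"
  shows "(\<Sum>j=a..b. v j) + 2 * v b \<le> 3 * v a"
  using assms(2)
proof (induction b rule: dec_induct)
  case (step b)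
  have "(\<Sum>j=a..Suc b. v j) = (\<Sum>j=a..b. v j) + v (Suc b)"
    using step(1) by simp
  moreover have "3 * v (Suc b) \<le> 2 * v b" using assms(1) step by simp
  ultimately show ?case using step.IH by simp
qed simp

lemma ntrees_growth_3:
  assumes "m \<ge> 6"
  shows "3 * ntrees (m - 1) \<le> ntrees m"
proof -
  have "3 \<le> 4 - 6 / real m" using assms by (simp add: field_simps)
  then have "3 * ntrees (m - 1) \<le> (4 - 6 / real m) * ntrees (m - 1)"
    using ntrees_nonneg by (rule mult_right_mono)
  then show ?thesis using ntrees_step[of m] assms by simp
qed

lemma first_moment_head:
  assumes n: "n \<ge> 1" and K1: "real n \<le> 2 ^ K" and K2: "4 * K \<le> n + 1"
  shows "2 ^ (K + 1) * real n * ntrees (n - K) \<le> 4 * ntrees n"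
proof -
  have nK: "n - K \<ge> 1" and nK': "n - K + K = n" using K2 n by linarith+
  have "1 - 3 * real K / (2 * real (n - K + 1)) \<ge> 1 / 2"
    using K2 nK by (simp add: field_simps of_nat_diff)
  then have "4 ^ K * (1 / 2) * ntrees (n - K)
      \<le> 4 ^ K * (1 - 3 * real K / (2 * real (n - K + 1))) * ntrees (n - K)"
    by (intro mult_right_mono mult_left_mono) (auto simp: ntrees_nonneg)
  also have "\<dots> \<le> ntrees n"
    using ntrees_lower[OF nK, of K] unfolding nK' .
  finally have "4 ^ K * (1 / 2) * ntrees (n - K) \<le> ntrees n" .
  moreover have "2 ^ (K + 1) * real n * ntrees (n - K) \<le> 2 * 2 ^ K * 2 ^ K * ntrees (n - K)"
    using K1 ntrees_nonneg[of "n - K"] by (simp add: mult_right_mono mult_left_mono)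
  ultimately show ?thesis by (simp add: power_mult_distrib[symmetric] algebra_simps)
qed

lemma first_moment_tail:
  assumes n: "n \<ge> 1" and K1: "real n \<le> 2 ^ K" and K2: "4 * K \<le> n + 1"
  shows "(\<Sum>j=K+1..n-5. 2 ^ j * real n * ntrees (n + 1 - j)) \<le> 12 * ntrees n"
proof -
  define v where "v j = 2 ^ j * real n * ntrees (n + 1 - j)" for j
  have v_nonneg: "v j \<ge> 0" for j
    by (simp add: v_def ntrees_nonneg)
  have "(\<Sum>j=K+1..n-5. v j) \<le> 3 * v (K + 1)"
  proof (cases "K + 1 \<le> n - 5")
    case True
    have "(\<Sum>j=K+1..n-5. v j) + 2 * v (n - 5) \<le> 3 * v (K + 1)"
    proof (rule geometric_sum_bound[OF _ True])
      fix j assume j: "K + 1 \<le> j" "j < n - 5"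
      have "3 * ntrees ((n + 1 - j) - 1) \<le> ntrees (n + 1 - j)"
        using j by (intro ntrees_growth_3) simp
      then have "2 * (2 ^ j * real n) * (3 * ntrees ((n + 1 - j) - 1))
          \<le> 2 * (2 ^ j * real n) * ntrees (n + 1 - j)"
        by (intro mult_left_mono) auto
      moreover have "n + 1 - Suc j = (n + 1 - j) - 1" by simp
      ultimately show "3 * v (Suc j) \<le> 2 * v j"
        by (simp add: v_def algebra_simps)
    qed
    then show ?thesis using v_nonneg[of "n - 5"] by simp
  qed (use v_nonneg in simp)
  also have "v (K + 1) \<le> 4 * ntrees n"
    unfolding v_def using first_moment_head[OF n K1 K2] by simp
  finally show ?thesis by (simp add: v_def)
qed

lemma E_gamma_upper:
  assumes n: "n \<ge> 1" and K1: "real n \<le> 2 ^ K" and K2: "4 * K \<le> n + 1"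
  shows "E_gamma n \<le> real K + 17"
proof -
  define extreme where "extreme j \<longleftrightarrow> j \<le> K \<or> n < j + 5" for j
  define w where "w j = 2 ^ j * real n * ntrees (n + 1 - j)" for j
  have layer: "real (card {t \<in> trees n. j \<le> gamma t}) \<le> (if extreme j then ntrees n else w j)"
    if "j \<in> {1..n}" for j
  proof -
    have "card {t \<in> trees n. j \<le> gamma t} \<le> card (trees n)"
      by (intro card_mono finite_trees) auto
    then show ?thesis using card_gamma_ge_first_moment[of j n] that
      by (auto simp: ntrees_def w_def)
  qed
  have extreme_count: "card ({1..n} \<inter> {j. extreme j}) \<le> K + 5"
  proof -
    have "card ({1..n} \<inter> {j. extreme j}) \<le> card ({1..K} \<union> {n - 4..n})"
      by (intro card_mono) (auto simp: extreme_def)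
    also have "\<dots> \<le> card {1..K} + card {n - 4..n}" by (rule card_Un_le)
    finally show ?thesis by simp
  qed
  have "(\<Sum>t\<in>trees n. real (gamma t)) \<le> (\<Sum>j=1..n. if extreme j then ntrees n else w j)"
    unfolding sum_gamma_layers by (intro sum_mono layer)
  also have "\<dots> = real (card ({1..n} \<inter> {j. extreme j})) * ntrees n
      + (\<Sum>j\<in>{1..n} \<inter> - {j. extreme j}. w j)"
    by (simp add: sum.If_cases)
  also have "{1..n} \<inter> - {j. extreme j} = {K+1..n-5}"
    by (auto simp: extreme_def)
  also have "(\<Sum>j=K+1..n-5. w j) \<le> 12 * ntrees n"
    unfolding w_def by (rule first_moment_tail[OF n K1 K2])
  also have "real (card ({1..n} \<inter> {j. extreme j})) * ntrees n \<le> (real K + 5) * ntrees n"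
    using extreme_count ntrees_nonneg[of n] by (intro mult_right_mono) auto
  finally have "(\<Sum>t\<in>trees n. real (gamma t)) \<le> (real K + 17) * ntrees n"
    by (simp add: algebra_simps)
  then show ?thesis using ntrees_pos[OF n] by (simp add: E_gamma_eq divide_simps)
qed


section \<open>Lower bound: the second moment method\<close>

lemma second_moment_inequality:
  fixes f :: "'a \<Rightarrow> real"
  assumes "finite Y"
  shows "(\<Sum>y\<in>Y. f y) ^ 2 \<le> real (card {y \<in> Y. f y \<noteq> 0}) * (\<Sum>y\<in>Y. f y ^ 2)"
proof -
  define \<chi> where "\<chi> y = (if f y \<noteq> 0 then 1 else 0 :: real)" for y
  have "(\<Sum>y\<in>Y. f y) ^ 2 = (\<Sum>y\<in>Y. \<chi> y * f y) ^ 2"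
    by (intro arg_cong[where f="\<lambda>x. x ^ 2"] sum.cong) (auto simp: \<chi>_def)
  also have "\<dots> \<le> (\<Sum>y\<in>Y. \<chi> y ^ 2) * (\<Sum>y\<in>Y. f y ^ 2)"
    by (rule Cauchy_Schwarz_ineq_sum)
  also have "(\<Sum>y\<in>Y. \<chi> y ^ 2) = (\<Sum>y\<in>Y. if f y \<noteq> 0 then 1 else 0)"
    by (intro sum.cong) (auto simp: \<chi>_def)
  also have "\<dots> = real (card {y \<in> Y. f y \<noteq> 0})"
    using assms by (simp add: sum.If_cases Int_def)
  finally show ?thesis .
qed

lemma ntrees_near_log_concave:
  assumes "b \<ge> 1"
  shows "ntrees (b + 2 * i) * (1 - 3 * real i / (2 * real (b + 1))) * ntrees b \<le> ntrees (b + i) ^ 2"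
proof (cases "1 - 3 * real i / (2 * real (b + 1)) \<ge> 0")
  case True
  define q where "q = 1 - 3 * real i / (2 * real (b + 1))"
  have q: "q \<ge> 0" using True by (simp add: q_def)
  have "ntrees (b + 2 * i) * q * ntrees b \<le> (4 ^ i * ntrees (b + i)) * q * ntrees b"
    using ntrees_upper[of "b + i" i] assms q ntrees_nonneg[of b]
    by (intro mult_right_mono) (auto simp: mult_2 add.assoc)
  also have "\<dots> = ntrees (b + i) * (4 ^ i * q * ntrees b)" by (simp add: algebra_simps)
  also have "\<dots> \<le> ntrees (b + i) * ntrees (b + i)"
    using ntrees_lower[OF assms, of i] ntrees_nonneg[of "b + i"]
    by (intro mult_left_mono) (auto simp: q_def)
  finally show ?thesis by (simp add: q_def power2_eq_square)
next
  case False
  then have "ntrees (b + 2 * i) * (1 - 3 * real i / (2 * real (b + 1))) * ntrees b \<le> 0"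
    using ntrees_nonneg by (intro mult_nonpos_nonneg mult_nonneg_nonpos) auto
  then show ?thesis using zero_le_power2[of "ntrees (b + i)"] by linarith
qed

text \<open>The error factor of the second moment method for caterpillars with k leaves in trees
  with n leaves: it tends to 1 when k \<approx> (1 - eps) log2 n.\<close>
definition lower_error :: "nat \<Rightarrow> nat \<Rightarrow> real" where
  "lower_error n k = 2 ^ k / real (n + 1 - k) + 1 / (1 - 3 * real (k - 1) / (2 * real (n + 3 - 2 * k)))"

lemma lower_error_pos:
  assumes k: "k \<ge> 2" and n: "4 * k \<le> n"
  shows "lower_error n k > 0"
proof -
  have "3 * real (k - 1) < 2 * real (n + 3 - 2 * k)"
    using k n by (simp add: of_nat_diff)
  then have "3 * real (k - 1) / (2 * real (n + 3 - 2 * k)) < 1"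
    using n by (simp add: divide_less_eq)
  then show ?thesis by (simp add: lower_error_def add_nonneg_pos)
qed

lemma second_moment_ratio:
  assumes k: "k \<ge> 2" and n: "4 * k \<le> n"
  shows "ntrees n * (\<Sum>t\<in>trees n. real (cat_count k t) ^ 2)
           \<le> (\<Sum>t\<in>trees n. real (cat_count k t)) ^ 2 * lower_error n k"
proof -
  define a where "a = n + 1 - k"
  define b where "b = n + 2 - 2 * k"
  define q where "q = 1 - 3 * real (k - 1) / (2 * real (b + 1))"
  define c :: real where "c = 2 ^ (k - 2)"
  define M1 where "M1 = (\<Sum>t\<in>trees n. real (cat_count k t))"
  have a1: "a \<ge> 1" and b1: "b \<ge> 1" and na: "n = a + (k - 1)" and ab: "a = b + (k - 1)"
    and nb: "n = b + 2 * (k - 1)" using k n by (auto simp: a_def b_def)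
  have q: "q > 0" using k n by (simp add: q_def b_def field_simps of_nat_diff)
  have err: "lower_error n k = 2 ^ k / real a + 1 / q"
    using k n by (simp add: lower_error_def a_def q_def b_def Suc_diff_le)
  have c2k: "c * 2 ^ k = 4 ^ (k - 1)"
  proof -
    have "c * 2 ^ k = 2 ^ (2 * (k - 1))" using k by (simp add: c_def flip: power_add)
    then show ?thesis by (simp add: power_mult)
  qed
  have M1: "M1 = c * real a * ntrees a"
    unfolding M1_def using moment1_eq[of k n] num_cats_eq[OF k] k n by (simp add: c_def a_def)
  have M2: "(\<Sum>t\<in>trees n. real (cat_count k t) ^ 2) = M1 + c ^ 2 * (real b * (real b - 1) * ntrees b)"
    unfolding M1_def using moment2_eq[of k n] num_cats_eq[OF k] k n by (simp add: c_def b_def)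
  have M1_pos: "M1 > 0" using M1 a1 ntrees_pos[OF a1] by (simp add: c_def)
  have first: "ntrees n * M1 \<le> M1 ^ 2 * (2 ^ k / real a)"
  proof -
    have "ntrees n \<le> 4 ^ (k - 1) * ntrees a" using ntrees_upper[OF a1, of "k - 1"] na by simp
    also have "\<dots> = M1 * (2 ^ k / real a)" using M1 c2k a1 by (simp add: field_simps)
    finally have "ntrees n * M1 \<le> (M1 * (2 ^ k / real a)) * M1"
      using M1_pos by (intro mult_right_mono) auto
    then show ?thesis by (simp add: power2_eq_square algebra_simps)
  qed
  have second: "ntrees n * (c ^ 2 * (real b * (real b - 1) * ntrees b)) \<le> M1 ^ 2 / q"
  proof -
    have bb: "real b * (real b - 1) \<le> real a ^ 2"
      using ab by (simp add: power2_eq_square mult_mono algebra_simps)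
    have "ntrees n * q * ntrees b \<le> ntrees a ^ 2"
      using ntrees_near_log_concave[OF b1, of "k - 1"] nb ab by (simp add: q_def)
    then have "(real b * (real b - 1)) * (ntrees n * q * ntrees b) \<le> real a ^ 2 * ntrees a ^ 2"
      using bb b1 q ntrees_nonneg by (intro mult_mono) auto
    then have "c ^ 2 * ((real b * (real b - 1)) * (ntrees n * q * ntrees b))
        \<le> c ^ 2 * (real a ^ 2 * ntrees a ^ 2)"
      by (rule mult_left_mono) simp
    moreover have "M1 ^ 2 = c ^ 2 * (real a ^ 2 * ntrees a ^ 2)"
      unfolding M1 by (simp add: power_mult_distrib)
    ultimately have "ntrees n * (c ^ 2 * (real b * (real b - 1) * ntrees b)) * q \<le> M1 ^ 2"
      by (simp add: algebra_simps)
    then show ?thesis using q by (simp add: field_simps)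
  qed
  show ?thesis
    using first second unfolding M2 err M1_def[symmetric] by (simp add: algebra_simps)
qed

lemma many_trees_contain_caterpillar:
  assumes k: "k \<ge> 2" and n: "4 * k \<le> n"
  shows "ntrees n \<le> real (card {t \<in> trees n. real (cat_count k t) \<noteq> 0}) * lower_error n k"
proof -
  define N where "N = real (card {t \<in> trees n. real (cat_count k t) \<noteq> 0})"
  define M2 where "M2 = (\<Sum>t\<in>trees n. real (cat_count k t) ^ 2)"
  have "(\<Sum>t\<in>trees n. real (cat_count k t)) > 0"
    using moment1_eq[of k n] num_cats_eq[OF k] ntrees_pos[of "n + 1 - k"] k n by simp
  also have "(\<Sum>t\<in>trees n. real (cat_count k t)) \<le> M2"
  proof -
    have "real m \<le> real m ^ 2" for m :: nat
      by (metis le_square of_nat_le_iff of_nat_mult power2_eq_square)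
    then show ?thesis unfolding M2_def by (intro sum_mono) auto
  qed
  finally have M2_pos: "M2 > 0" .
  have "ntrees n * M2 \<le> (\<Sum>t\<in>trees n. real (cat_count k t)) ^ 2 * lower_error n k"
    unfolding M2_def by (rule second_moment_ratio[OF k n])
  also have "\<dots> \<le> (N * M2) * lower_error n k"
    unfolding N_def M2_def using lower_error_pos[OF k n]
    by (intro mult_right_mono second_moment_inequality finite_trees) auto
  finally have "ntrees n * M2 \<le> (N * lower_error n k) * M2" by (simp add: algebra_simps)
  then show ?thesis using M2_pos by (simp add: N_def)
qed

lemma E_gamma_lower:
  assumes k: "k \<ge> 2" and n: "4 * k \<le> n"
  shows "real k \<le> E_gamma n * lower_error n k"
proof -
  define N where "N = real (card {t \<in> trees n. real (cat_count k t) \<noteq> 0})"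
  have n1: "n \<ge> 1" using k n by simp
  have err: "lower_error n k \<ge> 0" using lower_error_pos[OF k n] by simp
  have "real k * N = (\<Sum>t\<in>{t \<in> trees n. real (cat_count k t) \<noteq> 0}. real k)"
    by (simp add: N_def)
  also have "\<dots> \<le> (\<Sum>t\<in>{t \<in> trees n. real (cat_count k t) \<noteq> 0}. real (gamma t))"
    using le_gamma_iff_cat_count[of k] k by (intro sum_mono) auto
  also have "\<dots> \<le> (\<Sum>t\<in>trees n. real (gamma t))"
    by (intro sum_mono2 finite_trees) auto
  also have "\<dots> = E_gamma n * ntrees n" using ntrees_pos[OF n1] by (simp add: E_gamma_eq)
  finally have gamma_sum: "real k * N \<le> E_gamma n * ntrees n" .
  have "real k * ntrees n \<le> real k * (N * lower_error n k)"
    using many_trees_contain_caterpillar[OF k n] by (intro mult_left_mono) (auto simp: N_def)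
  also have "\<dots> = (real k * N) * lower_error n k" by (simp add: algebra_simps)
  also have "\<dots> \<le> (E_gamma n * ntrees n) * lower_error n k"
    using gamma_sum err by (rule mult_right_mono)
  finally show ?thesis using ntrees_pos[OF n1] by (simp add: algebra_simps)
qed

section \<open>Asymptotics\<close>

lemma E_gamma_nonneg: "E_gamma n \<ge> 0"
  by (simp add: E_gamma_def sum_nonneg)

text \<open>With K = \<lceil>log2 n\<rceil> the upper bound gives E_gamma n \<le> log2 n + 18 for large n.\<close>
lemma E_gamma_upper_eventually:
  "eventually (\<lambda>n. E_gamma n \<le> log 2 (real n) + 18) sequentially"
proof -
  have "eventually (\<lambda>n::nat. 4 * (log 2 (real n) + 1) \<le> real n + 1) sequentially"
    by real_asymp
  with eventually_ge_at_top[of 1] show ?thesis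
  proof eventually_elim
    case (elim n)
    define L where "L = log 2 (real n)"
    define K where "K = nat \<lceil>L\<rceil>"
    have L0: "L \<ge> 0" using elim by (simp add: L_def)
    then have KL: "L \<le> real K" "real K \<le> L + 1" by (simp_all add: K_def)
    have "real (4 * K) \<le> real (n + 1)" using KL elim by (simp add: L_def)
    then have K2: "4 * K \<le> n + 1" by linarith
    have "real n = 2 powr L" using elim by (simp add: L_def)
    also have "\<dots> \<le> 2 powr (real K)" using KL by simp
    finally have K1: "real n \<le> 2 ^ K" by (simp add: powr_realpow)
    show ?case using E_gamma_upper[OF _ K1 K2] KL elim by (simp add: L_def)
  qed
qed

lemma lower_error_bound:
  assumes n: "n \<ge> 1" and L: "L = log 2 (real n)" "6 * L \<le> real n"
    and k: "k \<ge> 2" "real k \<le> (1 - \<epsilon>) * L" and e: "0 < \<epsilon>"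
  shows "4 * k \<le> n"
    and "lower_error n k \<le> 2 * real n powr (- \<epsilon>) + 1 / (1 - 3 * L / real n)"
proof -
  have nr: "real n > 0" using n by simp
  have "L \<ge> 0" using n L by simp
  then have "(1 - \<epsilon>) * L \<le> L" using e by (simp add: algebra_simps)
  then have kL: "real k \<le> L" using k by linarith
  then show n4k: "4 * k \<le> n" using L by linarith
  have a: "real (n + 1 - k) \<ge> real n / 2" using n4k by (simp add: of_nat_diff)
  have "2 ^ k = 2 powr (real k)" by (simp add: powr_realpow)
  also have "\<dots> \<le> 2 powr ((1 - \<epsilon>) * L)" using k by simp
  also have "\<dots> = (2 powr L) powr (1 - \<epsilon>)" by (simp add: powr_powr mult.commute)
  also have "2 powr L = real n" using nr by (simp add: L)
  also have "real n powr (1 - \<epsilon>) = real n * real n powr (- \<epsilon>)"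
    using nr powr_add[of "real n" 1 "- \<epsilon>"] by simp
  finally have "2 ^ k / real (n + 1 - k) \<le> real n * real n powr (- \<epsilon>) / (real n / 2)"
    using a nr by (intro frac_le) auto
  then have first: "2 ^ k / real (n + 1 - k) \<le> 2 * real n powr (- \<epsilon>)"
    using nr by simp
  have "3 * real (k - 1) / (2 * real (n + 3 - 2 * k)) \<le> 3 * L / real n"
    using kL n4k nr k by (intro frac_le) (auto simp: of_nat_diff)
  moreover have "1 - 3 * L / real n > 0" using L nr by (simp add: field_simps)
  ultimately have "1 / (1 - 3 * real (k - 1) / (2 * real (n + 3 - 2 * k))) \<le> 1 / (1 - 3 * L / real n)"
    by (intro divide_left_mono) auto
  with first show "lower_error n k \<le> 2 * real n powr (- \<epsilon>) + 1 / (1 - 3 * L / real n)"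
    unfolding lower_error_def by (rule add_mono)
qed

text \<open>With k = \<lfloor>(1 - eps) log2 n\<rfloor> the lower bound gives E_gamma n \<ge> (1 - 2 eps) log2 n
  for large n.\<close>
lemma E_gamma_lower_eventually:
  assumes e: "0 < \<epsilon>" "\<epsilon> \<le> 1/2"
  shows "eventually (\<lambda>n. (1 - 2 * \<epsilon>) * log 2 (real n) \<le> E_gamma n) sequentially"
proof -
  have "(\<lambda>n::nat. 2 * real n powr (- \<epsilon>) + 1 / (1 - 3 * log 2 (real n) / real n)) \<longlonglongrightarrow> 1"
    using e by real_asymp
  then have "eventually (\<lambda>n::nat. 2 * real n powr (- \<epsilon>) + 1 / (1 - 3 * log 2 (real n) / real n)
      < 1 + \<epsilon> / 2) sequentially"
    by (rule order_tendstoD) (use e in simp)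
  moreover have "eventually (\<lambda>n::nat. 2 / \<epsilon> \<le> log 2 (real n)) sequentially"
    using e by real_asymp
  moreover have "eventually (\<lambda>n::nat. 4 \<le> log 2 (real n)) sequentially"
    by real_asymp
  moreover have "eventually (\<lambda>n::nat. 6 * log 2 (real n) \<le> real n) sequentially"
    by real_asymp
  moreover note eventually_ge_at_top[of 1]
  ultimately show ?thesis
  proof eventually_elim
    case (elim n)
    define L where "L = log 2 (real n)"
    define k where "k = nat \<lfloor>(1 - \<epsilon>) * L\<rfloor>"
    have eL: "\<epsilon> * L \<ge> 2" and L4: "L \<ge> 4"
      using elim e by (auto simp: L_def field_simps)
    have "(1 - \<epsilon>) * L \<ge> 2" using L4 e mult_mono[of "1/2" "1 - \<epsilon>" 4 L] by simp
    then have ky: "real k \<le> (1 - \<epsilon>) * L" "(1 - \<epsilon>) * L - 1 \<le> real k" and k2: "k \<ge> 2"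
      by (simp_all add: k_def) linarith+
    note bound = lower_error_bound[OF _ L_def _ k2 ky(1) e(1)]
    have "real k \<le> E_gamma n * lower_error n k"
      using elim bound(1) by (intro E_gamma_lower k2) (auto simp: L_def)
    also have "\<dots> \<le> E_gamma n * (1 + \<epsilon> / 2)"
      using elim bound(2) E_gamma_nonneg by (intro mult_left_mono) (auto simp: L_def)
    finally have kE: "real k \<le> E_gamma n * (1 + \<epsilon> / 2)" .
    have "(1 - 2 * \<epsilon>) * L * (1 + \<epsilon> / 2) \<le> (1 - \<epsilon>) * L - 1"
      using eL e mult_nonneg_nonneg[of \<epsilon> "\<epsilon> * L"] by (simp add: algebra_simps)
    then have "(1 - 2 * \<epsilon>) * L * (1 + \<epsilon> / 2) \<le> E_gamma n * (1 + \<epsilon> / 2)"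
      using ky kE by linarith
    then show ?case using e by (simp add: L_def)
  qed
qed


lemma ratio_eventually_above:
  fixes L E :: "nat \<Rightarrow> real"
  assumes L: "filterlim L at_top sequentially"
    and upper: "eventually (\<lambda>n. E n \<le> L n + c) sequentially"
    and half: "eventually (\<lambda>n. L n / 2 \<le> E n) sequentially"
    and a: "a < 1"
  shows "eventually (\<lambda>n. a < L n / E n) sequentially"
proof -
  have "eventually (\<lambda>n. \<bar>c\<bar> / (1 - a) + 1 \<le> L n) sequentially"
    using L by (simp add: filterlim_at_top)
  with upper half show ?thesis
  proof eventually_elim
    case (elim n)
    have "\<bar>c\<bar> / (1 - a) \<ge> 0" using a by simp
    then have L_pos: "L n > 0" using elim by linarith
    then have E_pos: "E n > 0" using elim by simp
    have "a * E n < L n"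
    proof (cases "a \<le> 0")
      case True then show ?thesis using mult_nonpos_nonneg[of a "E n"] E_pos L_pos by linarith
    next
      case False
      have "\<bar>c\<bar> < (1 - a) * L n" using elim a by (simp add: field_simps)
      moreover have "a * c \<le> \<bar>c\<bar>"
      proof -
        have "a * c \<le> a * \<bar>c\<bar>" using False by (simp add: mult_left_mono)
        also have "\<dots> \<le> \<bar>c\<bar>" using False a by (simp add: mult_left_le_one_le)
        finally show ?thesis .
      qed
      moreover have "a * E n \<le> a * (L n + c)" using False elim by (simp add: mult_left_mono)
      ultimately show ?thesis by (simp add: algebra_simps)
    qed
    then show ?case using E_pos by (simp add: field_simps)
  qed
qed

lemma ratio_eventually_below:
  fixes L E :: "nat \<Rightarrow> real"
  assumes L: "filterlim L at_top sequentially"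
    and lower: "\<And>\<epsilon>. 0 < \<epsilon> \<Longrightarrow> \<epsilon> \<le> 1/2 \<Longrightarrow> eventually (\<lambda>n. (1 - 2 * \<epsilon>) * L n \<le> E n) sequentially"
    and a: "1 < a"
  shows "eventually (\<lambda>n. L n / E n < a) sequentially"
proof -
  define \<epsilon> where "\<epsilon> = (1 - 1 / a) / 4"
  have e: "0 < \<epsilon>" "\<epsilon> \<le> 1/2" and e_pos: "1 - 2 * \<epsilon> > 0"
    using a by (auto simp: \<epsilon>_def field_simps)
  have e_lt: "1 < a * (1 - 2 * \<epsilon>)" using a by (simp add: \<epsilon>_def field_simps)
  have "eventually (\<lambda>n. 1 \<le> L n) sequentially"
    using L by (simp add: filterlim_at_top)
  with lower[OF e] show ?thesis
  proof eventually_elim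
    case (elim n)
    have "(1 - 2 * \<epsilon>) * L n > 0" using elim e_pos by simp
    then have "L n / E n \<le> L n / ((1 - 2 * \<epsilon>) * L n)"
      using elim by (intro divide_left_mono) auto
    also have "\<dots> = 1 / (1 - 2 * \<epsilon>)" using elim by simp
    also have "\<dots> < a" using e_lt e_pos by (simp add: field_simps)
    finally show ?case .
  qed
qed

lemma ratio_tendsto_one:
  fixes L E :: "nat \<Rightarrow> real"
  assumes L: "filterlim L at_top sequentially"
    and upper: "eventually (\<lambda>n. E n \<le> L n + c) sequentially"
    and lower: "\<And>\<epsilon>. 0 < \<epsilon> \<Longrightarrow> \<epsilon> \<le> 1/2 \<Longrightarrow> eventually (\<lambda>n. (1 - 2 * \<epsilon>) * L n \<le> E n) sequentially"
  shows "(\<lambda>n. L n / E n) \<longlonglongrightarrow> 1"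
proof (rule order_tendstoI)
  have "eventually (\<lambda>n. L n / 2 \<le> E n) sequentially"
    using lower[of "1/4"] by simp
  then show "eventually (\<lambda>n. a < L n / E n) sequentially" if "a < 1" for a
    using ratio_eventually_above[OF L upper _ that] by blast
  show "eventually (\<lambda>n. L n / E n < a) sequentially" if "1 < a" for a
    using ratio_eventually_below[OF L lower that] by blast
qed

theorem corollary4:
  shows "(\<lambda>n. log 2 (real n) / E_gamma n) \<longlonglongrightarrow> 1"
proof (rule ratio_tendsto_one)
  show "filterlim (\<lambda>n::nat. log 2 (real n)) at_top sequentially"
    by real_asymp
qed (use E_gamma_upper_eventually E_gamma_lower_eventually in auto)

end
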